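(* Let $D=D_1\cup D_2$ be the disjoint union of oriented virtual singular link diagrams $D_1$ and $D_2$ (with no crossings between $D_1$ and $D_2$). Then $R(D)=\phi(D)h+\psi(D)$ where $$\phi(D)=\phi(D_1)\psi(D_2)+\psi(D_1)\phi(D_2),\qquad \psi(D)=\phi(D_1)\phi(D_2)+\psi(D_1)\psi(D_2).$$
   Context: An oriented virtual singular link diagram is a generic immersion of finitely many oriented circles into $\mathbb{R}^2$ with finitely many transverse double points, each decorated as a classical crossing (with over/under information and the usual sign $\pm1$), a singular crossing, or a virtual crossing. At a classical or singular crossing, the oriented resolution replaces it by two disjoint arcs respecting orientation; the disoriented resolution replaces it by one arc joining the two incoming ends with a sink bivalent vertex and one arc joining the two outgoing ends with a source bivalent vertex. Virtual crossings are kept. A state $S$ of $D$ is a choice of resolution at every classical and singular crossing; it is a collection of immersed closed curves (all intersections virtual) with bivalent vertices, edge orientations alternating. $\|S\|$ = number of closed curves; $c(D)$ = number of classical crossings; $a(S)$ = #(negative classical crossings with oriented resolution) $-$ #(positive classical crossings with oriented resolution); $b(S)$ the same for disoriented resolutions; $\alpha(S),\beta(S)$ = numbers of singular crossings with oriented, resp. disoriented, resolution. An edge of $S$ is an arc between consecutive bivalent vertices (a closed curve without vertices is one edge); a weight map is $\tau:E(S)\to\{\pm1\}$ with different values on edges sharing a vertex; the parity $i(S)=\prod_v\tau(e_v)\tau(e_v')$ over all virtual crossings $v$, with $e_v,e_v'$ the edges meeting at $v$ (independent of $\tau$). With $\overline{R}(S)=A^{2a(S)+4b(S)}(-A^2-A^{-2})^{\alpha(S)+\|S\|}(-A^4-A^{-4})^{\beta(S)}$: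 $R(D)=(-1)^{c(D)}\sum_S\overline{R}(S)h^{\frac{1-i(S)}{2}}$, $\phi(D)=(-1)^{c(D)}\sum_{S:\,i(S)=-1}\overline{R}(S)$, $\psi(D)=(-1)^{c(D)}\sum_{S:\,i(S)=1}\overline{R}(S)$, so that $R(D)=\phi(D)h+\psi(D)$; the same definitions apply to $D_1$ and $D_2$. *)

theory Defs
  imports "HOL-Computational_Algebra.Formal_Laurent_Series" "HOL-Computational_Algebra.Polynomial"
begin

datatype ctype = Pos | Neg | Sing | Virt

text \<open>At every crossing x two oriented strands pass; strand k (k :: bool) enters x at
  the in-slot (x,k) and leaves x at the out-slot (x,k).  The arcs of the diagram are the
  segments between consecutive crossings; an arc is named by the out-slot (x,k) where it
  starts, and dnext D (x,k) = (y,l) means that this arc ends at the in-slot (y,l).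
  Crossingless circle components are recorded by the number dloops.\<close>
record 'c diagram =
  crossings :: "'c set"
  ctyp :: "'c \<Rightarrow> ctype"
  dnext :: "'c \<times> bool \<Rightarrow> 'c \<times> bool"
  dloops :: nat

definition arcs :: "('c, 'z) diagram_scheme \<Rightarrow> ('c \<times> bool) set" where
  "arcs D = crossings D \<times> UNIV"

definition wf_diagram :: "('c, 'z) diagram_scheme \<Rightarrow> bool" where
  "wf_diagram D \<longleftrightarrow> finite (crossings D) \<and> bij_betw (dnext D) (arcs D) (arcs D)"

definition classical :: "('c, 'z) diagram_scheme \<Rightarrow> 'c set" where
  "classical D = {x \<in> crossings D. ctyp D x = Pos \<or> ctyp D x = Neg}"

definition nonvirtual :: "('c, 'z) diagram_scheme \<Rightarrow> 'c set" where
  "nonvirtual D = {x \<in> crossings D. ctyp D x \<noteq> Virt}"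

definition virtual :: "('c, 'z) diagram_scheme \<Rightarrow> 'c set" where
  "virtual D = {x \<in> crossings D. ctyp D x = Virt}"

text \<open>Resolutions: oriented (Ori) or disoriented (Dis).  A state chooses a resolution at
  every classical and singular crossing (by convention the value is Ori elsewhere).\<close>
datatype res = Ori | Dis

definition states :: "('c, 'z) diagram_scheme \<Rightarrow> ('c \<Rightarrow> res) set" where
  "states D = {s. \<forall>x. x \<notin> nonvirtual D \<longrightarrow> s x = Ori}"

text \<open>Head-to-tail: arc p ends at in-slot (y,l) and the curve continues along arc q; at a virtual
  crossing the strand goes straight through (q = (y,l)), at an oriented resolution the incoming
  end of strand l is joined to the outgoing end of the other strand (q = (y, \<not> l)).
  Head-to-head (sink vertex) and tail-to-tail (source vertex) arise at disoriented resolutions.\<close>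
definition ht_join :: "('c, 'z) diagram_scheme \<Rightarrow> ('c \<Rightarrow> res) \<Rightarrow> 'c \<times> bool \<Rightarrow> 'c \<times> bool \<Rightarrow> bool" where
  "ht_join D s p q \<longleftrightarrow> p \<in> arcs D \<and> q \<in> arcs D \<and>
     (let (y, l) = dnext D p in
        (ctyp D y = Virt \<and> q = (y, l)) \<or>
        (ctyp D y \<noteq> Virt \<and> s y = Ori \<and> q = (y, \<not> l)))"

definition hh_join :: "('c, 'z) diagram_scheme \<Rightarrow> ('c \<Rightarrow> res) \<Rightarrow> 'c \<times> bool \<Rightarrow> 'c \<times> bool \<Rightarrow> bool" where
  "hh_join D s p q \<longleftrightarrow> p \<in> arcs D \<and> q \<in> arcs D \<and>
     (let (y, l) = dnext D p in
        ctyp D y \<noteq> Virt \<and> s y = Dis \<and> dnext D q = (y, \<not> l))"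

definition tt_join :: "('c, 'z) diagram_scheme \<Rightarrow> ('c \<Rightarrow> res) \<Rightarrow> 'c \<times> bool \<Rightarrow> 'c \<times> bool \<Rightarrow> bool" where
  "tt_join D s p q \<longleftrightarrow> p \<in> arcs D \<and> q \<in> arcs D \<and>
     (let (y, l) = p in ctyp D y \<noteq> Virt \<and> s y = Dis \<and> q = (y, \<not> l))"

definition joined :: "('c, 'z) diagram_scheme \<Rightarrow> ('c \<Rightarrow> res) \<Rightarrow> 'c \<times> bool \<Rightarrow> 'c \<times> bool \<Rightarrow> bool" where
  "joined D s p q \<longleftrightarrow> ht_join D s p q \<or> ht_join D s q p \<or> hh_join D s p q \<or> tt_join D s p q"

definition same_curve :: "('c, 'z) diagram_scheme \<Rightarrow> ('c \<Rightarrow> res) \<Rightarrow> ('c \<times> bool) rel" where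
  "same_curve D s = Id_on (arcs D) \<union> {(p, q). joined D s p q}\<^sup>+"

definition ncurves :: "('c, 'z) diagram_scheme \<Rightarrow> ('c \<Rightarrow> res) \<Rightarrow> nat" where
  "ncurves D s = card (arcs D // same_curve D s) + dloops D"

text \<open>Weight maps: the edges of the state (arcs between consecutive bivalent vertices) are the
  classes of arcs joined head-to-tail; a weight map is given on arcs, constant along edges,
  with values \<open>\<plusminus>1\<close>, and opposite values on the two edges at every bivalent vertex.
  (Crossingless circle components carry no virtual crossings and are irrelevant for the parity.)\<close>
definition weight_map :: "('c, 'z) diagram_scheme \<Rightarrow> ('c \<Rightarrow> res) \<Rightarrow> ('c \<times> bool \<Rightarrow> int) \<Rightarrow> bool" where
  "weight_map D s \<tau> \<longleftrightarrow>
     (\<forall>p\<in>arcs D. \<tau> p = 1 \<or> \<tau> p = -1) \<and>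
     (\<forall>p q. ht_join D s p q \<longrightarrow> \<tau> q = \<tau> p) \<and>
     (\<forall>p q. hh_join D s p q \<longrightarrow> \<tau> q = - \<tau> p) \<and>
     (\<forall>p q. tt_join D s p q \<longrightarrow> \<tau> q = - \<tau> p)"

text \<open>At a virtual crossing v the two edges meeting there are those containing the arcs
  (v,True) and (v,False) leaving v.\<close>
definition parity_with :: "('c, 'z) diagram_scheme \<Rightarrow> ('c \<times> bool \<Rightarrow> int) \<Rightarrow> int" where
  "parity_with D \<tau> = (\<Prod>v\<in>virtual D. \<tau> (v, True) * \<tau> (v, False))"

definition parity :: "('c, 'z) diagram_scheme \<Rightarrow> ('c \<Rightarrow> res) \<Rightarrow> int" where
  "parity D s = parity_with D (SOME \<tau>. weight_map D s \<tau>)"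

text \<open>The paper's remark that i(S) does not depend on the weight map (a consequence of the
  diagram being a planar immersion) as a property of the combinatorial diagram.\<close>
definition parity_independent :: "('c, 'z) diagram_scheme \<Rightarrow> bool" where
  "parity_independent D \<longleftrightarrow> (\<forall>s\<in>states D. \<forall>\<tau>1 \<tau>2.
     weight_map D s \<tau>1 \<longrightarrow> weight_map D s \<tau>2 \<longrightarrow> parity_with D \<tau>1 = parity_with D \<tau>2)"

definition ccount :: "('c, 'z) diagram_scheme \<Rightarrow> nat" where
  "ccount D = card (classical D)"

definition count_res :: "('c, 'z) diagram_scheme \<Rightarrow> ('c \<Rightarrow> res) \<Rightarrow> ctype \<Rightarrow> res \<Rightarrow> nat" where
  "count_res D s t r = card {x \<in> crossings D. ctyp D x = t \<and> s x = r}"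

definition a_st :: "('c, 'z) diagram_scheme \<Rightarrow> ('c \<Rightarrow> res) \<Rightarrow> int" where
  "a_st D s = int (count_res D s Neg Ori) - int (count_res D s Pos Ori)"

definition b_st :: "('c, 'z) diagram_scheme \<Rightarrow> ('c \<Rightarrow> res) \<Rightarrow> int" where
  "b_st D s = int (count_res D s Neg Dis) - int (count_res D s Pos Dis)"

definition alpha_st :: "('c, 'z) diagram_scheme \<Rightarrow> ('c \<Rightarrow> res) \<Rightarrow> nat" where
  "alpha_st D s = count_res D s Sing Ori"

definition beta_st :: "('c, 'z) diagram_scheme \<Rightarrow> ('c \<Rightarrow> res) \<Rightarrow> nat" where
  "beta_st D s = count_res D s Sing Dis"

text \<open>The variable A of Laurent polynomials (as formal Laurent series over the integers).\<close>
abbreviation varA :: "int \<Rightarrow> int fls" where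
  "varA k \<equiv> fls_X_intpow k"

definition Rbar :: "('c, 'z) diagram_scheme \<Rightarrow> ('c \<Rightarrow> res) \<Rightarrow> int fls" where
  "Rbar D s = varA (2 * a_st D s + 4 * b_st D s)
      * (- varA 2 - varA (-2)) ^ (alpha_st D s + ncurves D s)
      * (- varA 4 - varA (-4)) ^ (beta_st D s)"

text \<open>R(D) is a polynomial in h with coefficients Laurent polynomials in A.\<close>
definition Rinv :: "('c, 'z) diagram_scheme \<Rightarrow> int fls poly" where
  "Rinv D = (-1) ^ ccount D *
     (\<Sum>s\<in>states D. [: Rbar D s :] * [:0, 1:] ^ nat ((1 - parity D s) div 2))"

definition phi :: "('c, 'z) diagram_scheme \<Rightarrow> int fls" where
  "phi D = (-1) ^ ccount D * (\<Sum>s\<in>{s\<in>states D. parity D s = -1}. Rbar D s)"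

definition psi :: "('c, 'z) diagram_scheme \<Rightarrow> int fls" where
  "psi D = (-1) ^ ccount D * (\<Sum>s\<in>{s\<in>states D. parity D s = 1}. Rbar D s)"

definition dunion :: "'a diagram \<Rightarrow> 'b diagram \<Rightarrow> ('a + 'b) diagram" where
  "dunion D1 D2 =
     \<lparr> crossings = Inl ` crossings D1 \<union> Inr ` crossings D2,
       ctyp = case_sum (ctyp D1) (ctyp D2),
       dnext = (\<lambda>(z, k). case z of
                   Inl x \<Rightarrow> map_prod Inl id (dnext D1 (x, k))
                 | Inr y \<Rightarrow> map_prod Inr id (dnext D2 (y, k))),
       dloops = dloops D1 + dloops D2 \<rparr>"

end

theory Submission
  imports Defs
begin

text \<open>A state of the disjoint union is a pair of states of the two diagrams, and no junction joins
  arcs of different halves.  Hence crossing counts and numbers of closed curves add up, so that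
  Rbar is multiplicative, and weight maps of the union restrict to weight maps of the halves, so
  that (the parity being independent of the weight map) the parity is multiplicative too.
  Sorting the state sum of the union by the signs of the parities of the two halves gives the
  formulas for phi and psi.  The one global ingredient is that weight maps exist at all: on the
  ends of arcs, "the other end of the same arc" and "the end met at the same crossing or vertex"
  are two fixed-point-free involutions, and any two such involutions on a finite set admit a
  common separating two-colouring.\<close>

section \<open>Involutions, relations and sums\<close>

definition fpf_involution_on :: "'a set \<Rightarrow> ('a \<Rightarrow> 'a) \<Rightarrow> bool" where
  "fpf_involution_on X f \<longleftrightarrow> (\<forall>x\<in>X. f x \<in> X \<and> f (f x) = x \<and> f x \<noteq> x)"

lemma fpf_involution_onD:
  assumes "fpf_involution_on X f" "x \<in> X"
  shows "f x \<in> X" "f (f x) = x" "f x \<noteq> x"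
  using assms unfolding fpf_involution_on_def by auto

lemma fpf_involution_on_Diff_pair:
  assumes f: "fpf_involution_on X f" and x: "x \<in> X"
  shows "fpf_involution_on (X - {x, f x}) f"
  unfolding fpf_involution_on_def
proof
  fix u assume u: "u \<in> X - {x, f x}"
  have fu: "f (f u) = u" and fx: "f (f x) = x"
    using fpf_involution_onD(2)[OF f] u x by auto
  have "f u \<noteq> x" using fu u by auto
  moreover have "f u \<noteq> f x" using fu fx u by (metis Diff_iff insertCI)
  ultimately show "f u \<in> X - {x, f x} \<and> f (f u) = u \<and> f u \<noteq> u"
    using fpf_involution_onD[OF f] u by auto
qed

lemma fpf_involution_on_splice:
  assumes h: "fpf_involution_on X h" and x: "x \<in> X" and y: "y \<in> X" "x \<noteq> y" "h x \<noteq> y"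
  shows "fpf_involution_on (X - {x, y}) (h(h x := h y, h y := h x))"
  unfolding fpf_involution_on_def
proof
  note H = fpf_involution_onD[OF h]
  have hx: "h x \<in> X - {x, y}" using H[OF x] y(3) by auto
  have hy: "h y \<in> X - {x, y}" using H[OF y(1)] H(2)[OF x] y(3) by auto
  have "h x \<noteq> h y" using H(2)[OF x] H(2)[OF y(1)] y(2) by metis
  fix u assume u: "u \<in> X - {x, y}"
  consider "u = h x" | "u = h y" | "u \<in> X - {x, y, h x, h y}" using u by blast
  then show "(h(h x := h y, h y := h x)) u \<in> X - {x, y} \<and>
    (h(h x := h y, h y := h x)) ((h(h x := h y, h y := h x)) u) = u \<and>
    (h(h x := h y, h y := h x)) u \<noteq> u"
  proof cases
    case 3
    have "h (h u) = u" using H(2) 3 by blast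
    then have "h u \<noteq> x" "h u \<noteq> y" "h u \<noteq> h x" "h u \<noteq> h y"
      using 3 H(2)[OF x] H(2)[OF y(1)] by auto
    then show ?thesis using H[of u] 3 by auto
  qed (use hx hy \<open>h x \<noteq> h y\<close> in auto)
qed

definition separates_on :: "'a set \<Rightarrow> ('a \<Rightarrow> 'a) \<Rightarrow> ('a \<Rightarrow> bool) \<Rightarrow> bool" where
  "separates_on X f c \<longleftrightarrow> (\<forall>x\<in>X. c (f x) \<noteq> c x)"

lemma separates_onD: "separates_on X f c \<Longrightarrow> x \<in> X \<Longrightarrow> c (f x) = (\<not> c x)"
  unfolding separates_on_def by blast

lemma separates_on_extend_pair:
  assumes c: "separates_on (X - {x, y}) f c" and f: "fpf_involution_on (X - {x, y}) f"
    and xy: "f x = y" "f y = x" "x \<noteq> y" "b' \<noteq> b"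
  shows "separates_on X f (c(x := b, y := b'))"
  unfolding separates_on_def
proof
  fix u assume "u \<in> X"
  then consider "u = x" | "u = y" | "u \<in> X - {x, y}" by blast
  then show "(c(x := b, y := b')) (f u) \<noteq> (c(x := b, y := b')) u"
  proof cases
    case 3
    then show ?thesis using fpf_involution_onD(1)[OF f 3] separates_onD[OF c 3] by auto
  qed (use xy in simp_all)
qed

lemma separates_on_unsplice:
  assumes c: "separates_on (X - {x, y}) (h(h x := h y, h y := h x)) c"
    and h: "fpf_involution_on X h" and x: "x \<in> X" and y: "y \<in> X" "x \<noteq> y" "h x \<noteq> y"
  shows "separates_on X h (c(x := \<not> c (h x), y := c (h x)))"
  unfolding separates_on_def
proof
  note H = fpf_involution_onD[OF h]
  have hx: "h x \<in> X - {x, y}" using H[OF x] y(3) by auto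
  have hy: "h y \<in> X - {x, y}" using H[OF y(1)] H(2)[OF x] y(3) by auto
  have "h x \<noteq> h y" using H(2)[OF x] H(2)[OF y(1)] y(2) by metis
  then have hxy: "c (h y) \<noteq> c (h x)" using separates_onD[OF c hx] by simp
  fix u assume "u \<in> X"
  then consider "u = x" | "u = y" | "u = h x" | "u = h y" | "u \<in> X - {x, y, h x, h y}" by blast
  then show "(c(x := \<not> c (h x), y := c (h x))) (h u) \<noteq> (c(x := \<not> c (h x), y := c (h x))) u"
  proof cases
    case 5
    let ?h' = "h(h x := h y, h y := h x)"
    have "u \<in> X - {x, y}" using 5 by blast
    then have "?h' u \<in> X - {x, y}" "c (?h' u) \<noteq> c u"
      using fpf_involution_onD(1)[OF fpf_involution_on_splice[OF h x y]] separates_onD[OF c] by auto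
    moreover have "?h' u = h u" using 5 by simp
    ultimately show ?thesis using 5 by simp
  next
    case 1
    then show ?thesis using hx y(2) by simp
  next
    case 2
    then show ?thesis using hy hxy y(2) by simp
  next
    case 3
    then show ?thesis using hx H(2)[OF x] y(2) by simp
  next
    case 4
    then show ?thesis using hy hxy H(2)[OF y(1)] y(2) by auto
  qed
qed

text \<open>The graph with edges x -- r x and x -- h x is a union of cycles alternating between r- and
  h-edges, hence bipartite.  The induction removes an r-edge {x, y} and, unless h x = y, splices
  the h-edges at its ends into the single h-edge {h x, h y}.\<close>
lemma two_colouring_fpf_involutions:
  assumes "finite X" "fpf_involution_on X r" "fpf_involution_on X h"
  shows "\<exists>c. separates_on X r c \<and> separates_on X h c"
  using assms
proof (induction X arbitrary: h rule: finite_psubset_induct)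
  case (psubset X)
  show ?case
  proof (cases "X = {}")
    case False
    then obtain x where x: "x \<in> X" by blast
    define y where "y = r x"
    have y: "y \<in> X" "x \<noteq> y" "r y = x" "r x = y"
      using fpf_involution_onD[OF psubset.prems(1) x] unfolding y_def by auto
    have smaller: "X - {x, y} \<subset> X" using x by blast
    have r: "fpf_involution_on (X - {x, y}) r"
      unfolding y_def by (rule fpf_involution_on_Diff_pair[OF psubset.prems(1) x])
    show ?thesis
    proof (cases "h x = y")
      case True
      have h: "fpf_involution_on (X - {x, y}) h"
        using fpf_involution_on_Diff_pair[OF psubset.prems(2) x] True by simp
      obtain c where cr: "separates_on (X - {x, y}) r c" and ch: "separates_on (X - {x, y}) h c"
        using psubset.IH[OF smaller r h] by blast
      have "h y = x" using fpf_involution_onD(2)[OF psubset.prems(2) x] True by simp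
      have "separates_on X r (c(x := True, y := False))"
        by (rule separates_on_extend_pair[OF cr r y(4,3,2)]) simp
      moreover have "separates_on X h (c(x := True, y := False))"
        by (rule separates_on_extend_pair[OF ch h True \<open>h y = x\<close> y(2)]) simp
      ultimately show ?thesis by blast
    next
      case False
      obtain c where cr: "separates_on (X - {x, y}) r c"
        and ch: "separates_on (X - {x, y}) (h(h x := h y, h y := h x)) c"
        using psubset.IH[OF smaller r fpf_involution_on_splice[OF psubset.prems(2) x y(1,2) False]]
        by blast
      have "separates_on X r (c(x := \<not> c (h x), y := c (h x)))"
        by (rule separates_on_extend_pair[OF cr r y(4,3,2)]) simp
      moreover have "separates_on X h (c(x := \<not> c (h x), y := c (h x)))"
        by (rule separates_on_unsplice[OF ch psubset.prems(2) x y(1,2) False])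
      ultimately show ?thesis by blast
    qed
  qed (simp add: separates_on_def)
qed

lemma trancl_Un_disjoint:
  assumes "R \<subseteq> A \<times> A" "S \<subseteq> B \<times> B" "A \<inter> B = {}"
  shows "(R \<union> S)\<^sup>+ = R\<^sup>+ \<union> S\<^sup>+"
proof
  show "(R \<union> S)\<^sup>+ \<subseteq> R\<^sup>+ \<union> S\<^sup>+"
  proof (rule subrelI)
    fix x z assume "(x, z) \<in> (R \<union> S)\<^sup>+"
    then show "(x, z) \<in> R\<^sup>+ \<union> S\<^sup>+"
    proof (induction rule: trancl_induct)
      case (step y z)
      have "y \<in> A" if "(x, y) \<in> R\<^sup>+" using trancl_subset_Sigma[OF assms(1)] that by blast
      moreover have "y \<in> B" if "(x, y) \<in> S\<^sup>+" using trancl_subset_Sigma[OF assms(2)] that by blast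
      ultimately show ?case using step assms by (blast intro: trancl_into_trancl)
    qed auto
  qed
  show "R\<^sup>+ \<union> S\<^sup>+ \<subseteq> (R \<union> S)\<^sup>+"
    using trancl_mono[of _ R "R \<union> S"] trancl_mono[of _ S "R \<union> S"] by blast
qed

lemma trancl_map_prod_image:
  assumes "inj f"
  shows "(map_prod f f ` R)\<^sup>+ = map_prod f f ` R\<^sup>+"
proof
  show "map_prod f f ` R\<^sup>+ \<subseteq> (map_prod f f ` R)\<^sup>+"
  proof clarify
    fix x y assume "(x, y) \<in> R\<^sup>+"
    then show "(f x, f y) \<in> (map_prod f f ` R)\<^sup>+"
      by (induction rule: trancl_induct) (auto intro: trancl_into_trancl)
  qed
  show "(map_prod f f ` R)\<^sup>+ \<subseteq> map_prod f f ` R\<^sup>+"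
  proof clarify
    fix x y assume "(x, y) \<in> (map_prod f f ` R)\<^sup>+"
    then show "(x, y) \<in> map_prod f f ` R\<^sup>+"
    proof (induction rule: trancl_induct)
      case (step y z)
      then show ?case using injD[OF assms] by (blast intro: trancl_into_trancl)
    qed auto
  qed
qed

lemma quotient_Un_disjoint:
  assumes "r \<subseteq> A \<times> A" "s \<subseteq> B \<times> B" "A \<inter> B = {}"
  shows "(A \<union> B) // (r \<union> s) = A // r \<union> B // s"
proof -
  have "(r \<union> s) `` {x} = r `` {x}" if "x \<in> A" for x using assms that by blast
  moreover have "(r \<union> s) `` {x} = s `` {x}" if "x \<in> B" for x using assms that by blast
  ultimately show ?thesis unfolding quotient_def by auto
qed

lemma quotient_map_prod_image:
  assumes "inj f"
  shows "(f ` A) // (map_prod f f ` r) = (`) f ` (A // r)"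
proof -
  have "(map_prod f f ` r) `` {f x} = f ` (r `` {x})" for x
    using injD[OF assms] by auto
  then show ?thesis unfolding quotient_def by auto
qed

lemma card_quotient_Un_image:
  assumes "inj f" "inj g" "range f \<inter> range g = {}" "finite A" "finite B"
    and "Id_on A \<subseteq> r" "r \<subseteq> A \<times> A" "Id_on B \<subseteq> s" "s \<subseteq> B \<times> B"
  shows "card ((f ` A \<union> g ` B) // (map_prod f f ` r \<union> map_prod g g ` s)) = card (A // r) + card (B // s)"
proof -
  have "map_prod f f ` r \<subseteq> f ` A \<times> f ` A" "map_prod g g ` s \<subseteq> g ` B \<times> g ` B"
    using assms(7,9) by auto
  moreover have "f ` A \<inter> g ` B = {}" using assms(3) by blast
  ultimately have "(f ` A \<union> g ` B) // (map_prod f f ` r \<union> map_prod g g ` s) =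
      (f ` A) // (map_prod f f ` r) \<union> (g ` B) // (map_prod g g ` s)"
    by (rule quotient_Un_disjoint)
  also have "\<dots> = (`) f ` (A // r) \<union> (`) g ` (B // s)"
    by (simp add: quotient_map_prod_image assms(1,2))
  finally have "(f ` A \<union> g ` B) // (map_prod f f ` r \<union> map_prod g g ` s) = (`) f ` (A // r) \<union> (`) g ` (B // s)" .
  moreover have "(`) f ` (A // r) \<inter> (`) g ` (B // s) = {}"
  proof -
    have "f ` X \<noteq> g ` Y" if X: "X \<in> A // r" for X Y
    proof -
      obtain x where "x \<in> X" using X assms(6) by (auto elim!: quotientE)
      then have "f x \<in> f ` X" "f x \<notin> g ` Y" using assms(3) by auto
      then show ?thesis by metis
    qed
    then show ?thesis by blast
  qed
  moreover have "card ((`) f ` (A // r)) = card (A // r)" "card ((`) g ` (B // s)) = card (B // s)"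
    using inj_image_eq_iff[OF assms(1)] inj_image_eq_iff[OF assms(2)] by (auto intro!: card_image inj_onI)
  ultimately show ?thesis
    using finite_quotient[OF assms(4,7)] finite_quotient[OF assms(5,9)] by (simp add: card_Un_disjoint)
qed

lemma card_Inl_Inr_image:
  assumes "finite A" "finite B"
  shows "card (Inl ` A \<union> Inr ` B) = card A + card B"
proof -
  have "card (Inl ` A \<union> Inr ` B) = card ((Inl :: 'a \<Rightarrow> 'a + 'b) ` A) + card ((Inr :: 'b \<Rightarrow> 'a + 'b) ` B)"
    by (rule card_Un_disjoint) (auto simp: assms)
  then show ?thesis by (simp add: card_image)
qed

lemma prod_eq_1_or_minus_1:
  "\<forall>x\<in>A. f x = 1 \<or> f x = -1 \<Longrightarrow> prod f A = 1 \<or> prod f A = (-1 :: int)"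
proof (induction A rule: infinite_finite_induct)
  case (insert x F)
  then show ?case by auto
qed auto

lemma sum_product_sign_filter:
  fixes p :: "'a \<Rightarrow> int" and q :: "'b \<Rightarrow> int" and f :: "'a \<Rightarrow> 'r :: comm_semiring_1"
  assumes "finite A" "finite B" "\<forall>a\<in>A. p a = 1 \<or> p a = -1" "\<forall>b\<in>B. q b = 1 \<or> q b = -1"
    and "\<epsilon> = 1 \<or> \<epsilon> = -1"
  shows "(\<Sum>(a, b)\<in>{(a, b) \<in> A \<times> B. p a * q b = \<epsilon>}. f a * g b) =
    (\<Sum>a\<in>{a \<in> A. p a = 1}. f a) * (\<Sum>b\<in>{b \<in> B. q b = \<epsilon>}. g b) +
    (\<Sum>a\<in>{a \<in> A. p a = -1}. f a) * (\<Sum>b\<in>{b \<in> B. q b = -\<epsilon>}. g b)"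
proof -
  have "{(a, b) \<in> A \<times> B. p a * q b = \<epsilon>} =
      {a \<in> A. p a = 1} \<times> {b \<in> B. q b = \<epsilon>} \<union> {a \<in> A. p a = -1} \<times> {b \<in> B. q b = -\<epsilon>}"
    using assms(3-5) by auto
  moreover have "{a \<in> A. p a = 1} \<times> {b \<in> B. q b = \<epsilon>} \<inter> {a \<in> A. p a = -1} \<times> {b \<in> B. q b = -\<epsilon>} = {}"
    by auto
  ultimately show ?thesis
    using assms(1,2) by (simp add: sum.union_disjoint sum_product sum.cartesian_product[symmetric])
qed

lemma neg_one_power_mult_pCons:
  "(-1 :: 'a :: comm_ring_1 poly) ^ n * [:x:] = [:(-1) ^ n * x:]"
  by (induction n) (simp_all add: algebra_simps)

section \<open>Weight maps and the parity of a state\<close>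

definition dprev :: "('c, 'z) diagram_scheme \<Rightarrow> 'c \<times> bool \<Rightarrow> 'c \<times> bool" where
  "dprev D = inv_into (arcs D) (dnext D)"

lemma arcs_iff: "(x, k) \<in> arcs D \<longleftrightarrow> x \<in> crossings D"
  by (simp add: arcs_def)

lemma finite_arcs: "wf_diagram D \<Longrightarrow> finite (arcs D)"
  by (simp add: wf_diagram_def arcs_def)

lemma
  assumes "wf_diagram D" and "p \<in> arcs D"
  shows dnext_in_arcs: "dnext D p \<in> arcs D"
    and dprev_dnext: "dprev D (dnext D p) = p"
    and dprev_in_arcs: "dprev D p \<in> arcs D"
    and dnext_dprev: "dnext D (dprev D p) = p"
proof -
  have bij: "bij_betw (dnext D) (arcs D) (arcs D)" using assms(1) by (simp add: wf_diagram_def)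
  show "dnext D p \<in> arcs D" using bij_betwE[OF bij] assms(2) by blast
  show "dprev D (dnext D p) = p" using bij_betw_inv_into_left[OF bij assms(2)] by (simp add: dprev_def)
  show "dprev D p \<in> arcs D" using bij assms(2) unfolding dprev_def by (metis bij_betw_def inv_into_into)
  show "dnext D (dprev D p) = p" using bij_betw_inv_into_right[OF bij assms(2)] by (simp add: dprev_def)
qed

text \<open>The two ends of an arc p are encoded as (p, True) (its head, at the in-slot dnext D p) and
  (p, False) (its tail, at the out-slot p).  In a state s every end is matched with the end of
  the other arc it meets at a crossing or at a bivalent vertex.\<close>
definition end_partner ::
  "('c, 'z) diagram_scheme \<Rightarrow> ('c \<Rightarrow> res) \<Rightarrow> ('c \<times> bool) \<times> bool \<Rightarrow> ('c \<times> bool) \<times> bool" where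
  "end_partner D s e = (case e of
     (p, True) \<Rightarrow> (case dnext D p of (y, l) \<Rightarrow>
        if ctyp D y = Virt then ((y, l), False)
        else if s y = Ori then ((y, \<not> l), False)
        else (dprev D (y, \<not> l), True))
   | ((x, k), False) \<Rightarrow>
        if ctyp D x = Virt then (dprev D (x, k), True)
        else if s x = Ori then (dprev D (x, \<not> k), True)
        else ((x, \<not> k), False))"

lemma fpf_involution_on_end_partner:
  assumes wf: "wf_diagram D"
  shows "fpf_involution_on (arcs D \<times> UNIV) (end_partner D s)"
  unfolding fpf_involution_on_def
proof
  fix e assume "e \<in> arcs D \<times> (UNIV :: bool set)"
  then obtain x k b where e: "e = ((x, k), b)" and xk: "(x, k) \<in> arcs D" by auto
  show "end_partner D s e \<in> arcs D \<times> UNIV \<and> end_partner D s (end_partner D s e) = e \<and>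
    end_partner D s e \<noteq> e"
  proof (cases b)
    case True
    obtain y l where yl: "dnext D (x, k) = (y, l)" by fastforce
    have y: "(y, l) \<in> arcs D" "(y, \<not> l) \<in> arcs D"
      using dnext_in_arcs[OF wf xk] yl by (simp_all add: arcs_iff)
    have prev_yl: "dprev D (y, l) = (x, k)" using dprev_dnext[OF wf xk] yl by simp
    consider "ctyp D y = Virt" | "ctyp D y \<noteq> Virt" "s y = Ori" | "ctyp D y \<noteq> Virt" "s y = Dis"
      using res.exhaust by blast
    then show ?thesis
    proof cases
      case 3
      let ?q = "dprev D (y, \<not> l)"
      have "?q \<in> arcs D" "dnext D ?q = (y, \<not> l)"
        using dprev_in_arcs[OF wf y(2)] dnext_dprev[OF wf y(2)] by auto
      moreover have "?q \<noteq> (x, k)" using calculation(2) yl by auto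
      ultimately show ?thesis using e True yl prev_yl 3 by (auto simp: end_partner_def)
    qed (use e True yl y prev_yl in \<open>auto simp: end_partner_def\<close>)
  next
    case False
    have x: "(x, \<not> k) \<in> arcs D" using xk by (simp add: arcs_iff)
    consider "ctyp D x = Virt" | "ctyp D x \<noteq> Virt" "s x = Ori" | "ctyp D x \<noteq> Virt" "s x = Dis"
      using res.exhaust by blast
    then show ?thesis
    proof cases
      case 1
      then show ?thesis using e False dprev_in_arcs[OF wf xk] dnext_dprev[OF wf xk]
        by (auto simp: end_partner_def)
    next
      case 2
      let ?q = "dprev D (x, \<not> k)"
      have "end_partner D s e = (?q, True)" using e False 2 by (simp add: end_partner_def)
      moreover have "end_partner D s (?q, True) = e"
        using e False 2 dnext_dprev[OF wf x] by (simp add: end_partner_def)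
      ultimately show ?thesis using dprev_in_arcs[OF wf x] e False by auto
    qed (use e False x in \<open>auto simp: end_partner_def\<close>)
  qed
qed

lemma weight_map_of_separating_colouring:
  assumes wf: "wf_diagram D"
    and c: "separates_on (arcs D \<times> UNIV) (apsnd Not) c" "separates_on (arcs D \<times> UNIV) (end_partner D s) c"
  shows "weight_map D s (\<lambda>p. if c (p, True) then 1 else -1)" (is "weight_map D s ?\<tau>")
proof -
  have tail: "c (p, False) = (\<not> c (p, True))" if "p \<in> arcs D" for p
    using separates_onD[OF c(1), of "(p, True)"] that by simp
  have partner: "c (end_partner D s (p, b)) = (\<not> c (p, b))" if "p \<in> arcs D" for p b
    using separates_onD[OF c(2)] that by simp
  show ?thesis
    unfolding weight_map_def
  proof (intro conjI allI impI)
    show "\<forall>p\<in>arcs D. ?\<tau> p = 1 \<or> ?\<tau> p = - 1" by simp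
  next
    fix p q assume j: "ht_join D s p q"
    obtain y l where yl: "dnext D p = (y, l)" by fastforce
    have "end_partner D s (p, True) = (q, False)" "p \<in> arcs D" "q \<in> arcs D"
      using j yl by (auto simp: ht_join_def end_partner_def)
    then show "?\<tau> q = ?\<tau> p" using partner[of p True] tail[of q] by simp
  next
    fix p q assume j: "hh_join D s p q"
    obtain y l where yl: "dnext D p = (y, l)" by fastforce
    have pq: "p \<in> arcs D" "q \<in> arcs D" using j by (auto simp: hh_join_def)
    have "dprev D (y, \<not> l) = q" using j yl dprev_dnext[OF wf pq(2)] by (auto simp: hh_join_def)
    then have "end_partner D s (p, True) = (q, True)" using j yl by (auto simp: hh_join_def end_partner_def)
    then show "?\<tau> q = - ?\<tau> p" using partner[OF pq(1), of True] by simp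
  next
    fix p q assume j: "tt_join D s p q"
    obtain y l where yl: "p = (y, l)" by fastforce
    have "end_partner D s (p, False) = (q, False)" "p \<in> arcs D" "q \<in> arcs D"
      using j yl by (auto simp: tt_join_def end_partner_def)
    then show "?\<tau> q = - ?\<tau> p" using partner[of p False] tail[of p] tail[of q] by simp
  qed
qed

lemma weight_map_exists:
  assumes "wf_diagram D"
  shows "\<exists>\<tau>. weight_map D s \<tau>"
proof -
  have "finite (arcs D \<times> (UNIV :: bool set))" using finite_arcs[OF assms] by simp
  moreover have "fpf_involution_on (arcs D \<times> UNIV) (apsnd Not)"
    by (auto simp: fpf_involution_on_def)
  ultimately obtain c where "separates_on (arcs D \<times> UNIV) (apsnd Not) c"
    "separates_on (arcs D \<times> UNIV) (end_partner D s) c"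
    using two_colouring_fpf_involutions[OF _ _ fpf_involution_on_end_partner[OF assms]] by blast
  from weight_map_of_separating_colouring[OF assms this] show ?thesis by blast
qed

lemma parity_eq_1_or_minus_1:
  assumes "wf_diagram D"
  shows "parity D s = 1 \<or> parity D s = -1"
  unfolding parity_def parity_with_def
proof (intro prod_eq_1_or_minus_1 ballI)
  let ?\<tau> = "SOME \<tau>. weight_map D s \<tau>"
  fix v assume "v \<in> virtual D"
  then have "(v, b) \<in> arcs D" for b by (simp add: virtual_def arcs_def)
  moreover have "weight_map D s ?\<tau>" using weight_map_exists[OF assms] by (rule someI_ex)
  ultimately have "?\<tau> (v, b) = 1 \<or> ?\<tau> (v, b) = -1" for b unfolding weight_map_def by blast
  from this[of True] this[of False] show "?\<tau> (v, True) * ?\<tau> (v, False) = 1 \<or> ?\<tau> (v, True) * ?\<tau> (v, False) = -1"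
    by auto
qed

lemma finite_states:
  assumes "finite (crossings D)"
  shows "finite (states D)"
proof -
  have "finite (nonvirtual D)" using assms by (simp add: nonvirtual_def)
  moreover have "finite (UNIV :: res set)"
    by (rule finite_subset[of _ "{Ori, Dis}"]) (use res.exhaust in auto)
  ultimately show ?thesis
    using finite_set_of_finite_funs[of "nonvirtual D" UNIV Ori] by (simp add: states_def)
qed

lemma joined_in_arcs: "joined D s p q \<Longrightarrow> p \<in> arcs D \<and> q \<in> arcs D"
  by (auto simp: joined_def ht_join_def hh_join_def tt_join_def)

lemma same_curve_subset: "same_curve D s \<subseteq> arcs D \<times> arcs D"
proof -
  have "{(p, q). joined D s p q} \<subseteq> arcs D \<times> arcs D" using joined_in_arcs by blast
  then show ?thesis unfolding same_curve_def using trancl_subset_Sigma by blast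
qed

lemma Id_on_arcs_subset_same_curve: "Id_on (arcs D) \<subseteq> same_curve D s"
  by (simp add: same_curve_def)

lemma Rinv_eq_phi_psi:
  assumes "wf_diagram D"
  shows "Rinv D = [:phi D:] * [:0, 1:] + [:psi D:]"
proof -
  have fin: "finite (states D)" using assms by (simp add: wf_diagram_def finite_states)
  define odd_part where "odd_part s = (if parity D s = -1 then Rbar D s else 0)" for s
  define even_part where "even_part s = (if parity D s = 1 then Rbar D s else 0)" for s
  have "[:Rbar D s:] * [:0, 1:] ^ nat ((1 - parity D s) div 2) = [:odd_part s:] * [:0, 1:] + [:even_part s:]"
    for s using parity_eq_1_or_minus_1[OF assms, of s] by (auto simp: odd_part_def even_part_def)
  then have "Rinv D = (-1) ^ ccount D * (\<Sum>s\<in>states D. [:odd_part s:] * [:0, 1:] + [:even_part s:])"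
    unfolding Rinv_def by simp
  also have "\<dots> = (-1) ^ ccount D * ([:\<Sum>s\<in>states D. odd_part s:] * [:0, 1:] + [:\<Sum>s\<in>states D. even_part s:])"
    by (simp only: sum.distrib sum_distrib_right flip: sum_to_poly)
  finally have Rinv: "Rinv D = \<dots>" .
  have phi_psi: "phi D = (-1) ^ ccount D * (\<Sum>s\<in>states D. odd_part s)"
    "psi D = (-1) ^ ccount D * (\<Sum>s\<in>states D. even_part s)"
    unfolding phi_def psi_def odd_part_def even_part_def using fin by (simp_all add: sum.inter_filter)
  show ?thesis
    unfolding Rinv phi_psi neg_one_power_mult_pCons[symmetric] by (simp add: algebra_simps)
qed

section \<open>Disjoint union\<close>

abbreviation (input) inl_arc :: "'a \<times> bool \<Rightarrow> ('a + 'b) \<times> bool" where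
  "inl_arc \<equiv> map_prod Inl id"

abbreviation (input) inr_arc :: "'b \<times> bool \<Rightarrow> ('a + 'b) \<times> bool" where
  "inr_arc \<equiv> map_prod Inr id"

lemma dunion_simps [simp]:
  "crossings (dunion D1 D2) = Inl ` crossings D1 \<union> Inr ` crossings D2"
  "ctyp (dunion D1 D2) (Inl x) = ctyp D1 x"
  "ctyp (dunion D1 D2) (Inr y) = ctyp D2 y"
  "dnext (dunion D1 D2) (Inl x, k) = inl_arc (dnext D1 (x, k))"
  "dnext (dunion D1 D2) (Inr y, k) = inr_arc (dnext D2 (y, k))"
  "dloops (dunion D1 D2) = dloops D1 + dloops D2"
  by (simp_all add: dunion_def)

lemma arcs_dunion_iff [simp]:
  "(Inl x, k) \<in> arcs (dunion D1 D2) \<longleftrightarrow> (x, k) \<in> arcs D1"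
  "(Inr y, k) \<in> arcs (dunion D1 D2) \<longleftrightarrow> (y, k) \<in> arcs D2"
  by (auto simp: arcs_def)

lemma inj_inl_arc: "inj inl_arc"
  and inj_inr_arc: "inj inr_arc"
  by (auto intro!: injI simp: map_prod_def split: prod.splits)

lemma dunion_arc_cases:
  obtains x k where "p = (Inl x, k)" | y k where "p = (Inr y, k)"
  by (metis obj_sumE prod.collapse)

lemma dunion_arc_image_iff [simp]:
  "(Inl x, k) \<in> inl_arc ` A \<longleftrightarrow> (x, k) \<in> A"
  "(Inr y, k) \<in> inr_arc ` B \<longleftrightarrow> (y, k) \<in> B"
  "(Inr y, k) \<notin> inl_arc ` A"
  "(Inl x, k) \<notin> inr_arc ` B"
  by (auto simp: image_iff Bex_def)

lemma arcs_dunion: "arcs (dunion D1 D2) = inl_arc ` arcs D1 \<union> inr_arc ` arcs D2"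
proof (rule set_eqI)
  fix p show "p \<in> arcs (dunion D1 D2) \<longleftrightarrow> p \<in> inl_arc ` arcs D1 \<union> inr_arc ` arcs D2"
    by (cases p rule: dunion_arc_cases) simp_all
qed

lemma wf_dunion:
  assumes "wf_diagram D1" "wf_diagram D2"
  shows "wf_diagram (dunion D1 D2)"
proof -
  have "bij_betw (dnext (dunion D1 D2)) (inl_arc ` arcs D1) (inl_arc ` arcs D1)"
  proof -
    have inj: "bij_betw inl_arc (arcs D1) (inl_arc ` arcs D1)"
      using inj_on_imp_bij_betw inj_on_subset[OF inj_inl_arc] by blast
    have bij: "bij_betw (inl_arc \<circ> dnext D1) (arcs D1) (inl_arc ` arcs D1)"
      using assms(1) inj unfolding wf_diagram_def by (blast intro: bij_betw_trans)
    have "inl_arc \<circ> dnext D1 = dnext (dunion D1 D2) \<circ> inl_arc" by (auto simp: fun_eq_iff)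
    with bij show ?thesis unfolding bij_betw_comp_iff[OF inj] by metis
  qed
  moreover have "bij_betw (dnext (dunion D1 D2)) (inr_arc ` arcs D2) (inr_arc ` arcs D2)"
  proof -
    have inj: "bij_betw inr_arc (arcs D2) (inr_arc ` arcs D2)"
      using inj_on_imp_bij_betw inj_on_subset[OF inj_inr_arc] by blast
    have bij: "bij_betw (inr_arc \<circ> dnext D2) (arcs D2) (inr_arc ` arcs D2)"
      using assms(2) inj unfolding wf_diagram_def by (blast intro: bij_betw_trans)
    have "inr_arc \<circ> dnext D2 = dnext (dunion D1 D2) \<circ> inr_arc" by (auto simp: fun_eq_iff)
    with bij show ?thesis unfolding bij_betw_comp_iff[OF inj] by metis
  qed
  ultimately have "bij_betw (dnext (dunion D1 D2)) (arcs (dunion D1 D2)) (arcs (dunion D1 D2))"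
    unfolding arcs_dunion by (rule bij_betw_combine) auto
  then show ?thesis using assms by (simp add: wf_diagram_def)
qed

lemma ht_join_dunion:
  "ht_join (dunion D1 D2) s (Inl x, k) (Inl x', k') = ht_join D1 (s \<circ> Inl) (x, k) (x', k')"
  "ht_join (dunion D1 D2) s (Inr y, k) (Inr y', k') = ht_join D2 (s \<circ> Inr) (y, k) (y', k')"
  "\<not> ht_join (dunion D1 D2) s (Inl x, k) (Inr y, k')"
  "\<not> ht_join (dunion D1 D2) s (Inr y, k) (Inl x, k')"
  by (cases "dnext D1 (x, k)"; cases "dnext D2 (y, k)"; auto simp: ht_join_def)+

lemma hh_join_dunion:
  "hh_join (dunion D1 D2) s (Inl x, k) (Inl x', k') = hh_join D1 (s \<circ> Inl) (x, k) (x', k')"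
  "hh_join (dunion D1 D2) s (Inr y, k) (Inr y', k') = hh_join D2 (s \<circ> Inr) (y, k) (y', k')"
  "\<not> hh_join (dunion D1 D2) s (Inl x, k) (Inr y, k')"
  "\<not> hh_join (dunion D1 D2) s (Inr y, k) (Inl x, k')"
     apply (cases "dnext D1 (x, k)"; cases "dnext D1 (x', k')"; auto simp: hh_join_def)
    apply (cases "dnext D2 (y, k)"; cases "dnext D2 (y', k')"; auto simp: hh_join_def)
   apply (cases "dnext D1 (x, k)"; cases "dnext D2 (y, k')"; auto simp: hh_join_def)
  apply (cases "dnext D2 (y, k)"; cases "dnext D1 (x, k')"; auto simp: hh_join_def)
  done

lemma tt_join_dunion:
  "tt_join (dunion D1 D2) s (Inl x, k) (Inl x', k') = tt_join D1 (s \<circ> Inl) (x, k) (x', k')"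
  "tt_join (dunion D1 D2) s (Inr y, k) (Inr y', k') = tt_join D2 (s \<circ> Inr) (y, k) (y', k')"
  "\<not> tt_join (dunion D1 D2) s (Inl x, k) (Inr y, k')"
  "\<not> tt_join (dunion D1 D2) s (Inr y, k) (Inl x, k')"
  by (auto simp: tt_join_def)

lemma joined_dunion_iff [simp]:
  "joined (dunion D1 D2) s (Inl x, k) (Inl x', k') = joined D1 (s \<circ> Inl) (x, k) (x', k')"
  "joined (dunion D1 D2) s (Inr y, k) (Inr y', k') = joined D2 (s \<circ> Inr) (y, k) (y', k')"
  "\<not> joined (dunion D1 D2) s (Inl x, k) (Inr y, k')"
  "\<not> joined (dunion D1 D2) s (Inr y, k) (Inl x, k')"
  by (simp_all add: joined_def ht_join_dunion hh_join_dunion tt_join_dunion)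

lemma dunion_arc_pair_image_iff [simp]:
  "((Inl x, k), (Inl x', k')) \<in> map_prod inl_arc inl_arc ` R \<longleftrightarrow> ((x, k), (x', k')) \<in> R"
  "((Inr y, k), (Inr y', k')) \<in> map_prod inr_arc inr_arc ` S \<longleftrightarrow> ((y, k), (y', k')) \<in> S"
  "((Inl x, k), q) \<notin> map_prod inr_arc inr_arc ` S"
  "((Inr y, k), q) \<notin> map_prod inl_arc inl_arc ` R"
  "(p, (Inl x, k)) \<notin> map_prod inr_arc inr_arc ` S"
  "(p, (Inr y, k)) \<notin> map_prod inl_arc inl_arc ` R"
  using inj_image_mem_iff[OF prod.inj_map[OF inj_inl_arc inj_inl_arc], of "((x, k), (x', k'))" R]
    inj_image_mem_iff[OF prod.inj_map[OF inj_inr_arc inj_inr_arc], of "((y, k), (y', k'))" S]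
  by auto

lemma joined_dunion:
  "{(p, q). joined (dunion D1 D2) s p q} =
     map_prod inl_arc inl_arc ` {(p, q). joined D1 (s \<circ> Inl) p q} \<union>
     map_prod inr_arc inr_arc ` {(p, q). joined D2 (s \<circ> Inr) p q}"
proof (rule set_eqI)
  fix e :: "(('a + 'b) \<times> bool) \<times> ('a + 'b) \<times> bool"
  obtain p q where "e = (p, q)" by (cases e)
  then show "e \<in> {(p, q). joined (dunion D1 D2) s p q} \<longleftrightarrow> e \<in> map_prod inl_arc inl_arc ` {(p, q). joined D1 (s \<circ> Inl) p q} \<union>
     map_prod inr_arc inr_arc ` {(p, q). joined D2 (s \<circ> Inr) p q}"
    by (cases p rule: dunion_arc_cases; cases q rule: dunion_arc_cases) simp_all
qed

lemma same_curve_dunion: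
  "same_curve (dunion D1 D2) s =
     map_prod inl_arc inl_arc ` same_curve D1 (s \<circ> Inl) \<union> map_prod inr_arc inr_arc ` same_curve D2 (s \<circ> Inr)"
proof -
  let ?J1 = "{(p, q). joined D1 (s \<circ> Inl) p q}" and ?J2 = "{(p, q). joined D2 (s \<circ> Inr) p q}"
  have "?J1 \<subseteq> arcs D1 \<times> arcs D1" "?J2 \<subseteq> arcs D2 \<times> arcs D2" using joined_in_arcs by blast+
  then have "map_prod inl_arc inl_arc ` ?J1 \<subseteq> inl_arc ` arcs D1 \<times> inl_arc ` arcs D1"
    "map_prod inr_arc inr_arc ` ?J2 \<subseteq> inr_arc ` arcs D2 \<times> inr_arc ` arcs D2"
    unfolding map_prod_surj_on[OF refl refl, symmetric] by (simp_all only: image_mono)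
  moreover have "inl_arc ` arcs D1 \<inter> inr_arc ` arcs D2 = {}" by auto
  ultimately have "{(p, q). joined (dunion D1 D2) s p q}\<^sup>+ =
      (map_prod inl_arc inl_arc ` ?J1)\<^sup>+ \<union> (map_prod inr_arc inr_arc ` ?J2)\<^sup>+"
    unfolding joined_dunion by (rule trancl_Un_disjoint)
  also have "\<dots> = map_prod inl_arc inl_arc ` ?J1\<^sup>+ \<union> map_prod inr_arc inr_arc ` ?J2\<^sup>+"
    by (simp only: trancl_map_prod_image inj_inl_arc inj_inr_arc)
  finally have J: "{(p, q). joined (dunion D1 D2) s p q}\<^sup>+ = \<dots>" .
  have "Id_on (arcs (dunion D1 D2)) =
      map_prod inl_arc inl_arc ` Id_on (arcs D1) \<union> map_prod inr_arc inr_arc ` Id_on (arcs D2)"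
    unfolding arcs_dunion by auto
  with J show ?thesis unfolding same_curve_def image_Un by (simp only: Un_ac)
qed

lemma ncurves_dunion:
  assumes "wf_diagram D1" "wf_diagram D2"
  shows "ncurves (dunion D1 D2) s = ncurves D1 (s \<circ> Inl) + ncurves D2 (s \<circ> Inr)"
proof -
  have "range inl_arc \<inter> range inr_arc = {}" by auto
  then have "card (arcs (dunion D1 D2) // same_curve (dunion D1 D2) s) =
      card (arcs D1 // same_curve D1 (s \<circ> Inl)) + card (arcs D2 // same_curve D2 (s \<circ> Inr))"
    unfolding arcs_dunion same_curve_dunion
    by (intro card_quotient_Un_image inj_inl_arc inj_inr_arc finite_arcs assms same_curve_subset
        Id_on_arcs_subset_same_curve)
  then show ?thesis by (simp add: ncurves_def)
qed

lemma count_res_dunion: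
  assumes "finite (crossings D1)" "finite (crossings D2)"
  shows "count_res (dunion D1 D2) s t r = count_res D1 (s \<circ> Inl) t r + count_res D2 (s \<circ> Inr) t r"
proof -
  have "{x \<in> crossings (dunion D1 D2). ctyp (dunion D1 D2) x = t \<and> s x = r} =
      Inl ` {x \<in> crossings D1. ctyp D1 x = t \<and> (s \<circ> Inl) x = r} \<union>
      Inr ` {y \<in> crossings D2. ctyp D2 y = t \<and> (s \<circ> Inr) y = r}"
    by auto
  then show ?thesis unfolding count_res_def using assms by (simp add: card_Inl_Inr_image)
qed

lemma ccount_dunion:
  assumes "finite (crossings D1)" "finite (crossings D2)"
  shows "ccount (dunion D1 D2) = ccount D1 + ccount D2"
proof -
  have "classical (dunion D1 D2) = Inl ` classical D1 \<union> Inr ` classical D2"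
    by (auto simp: classical_def)
  then show ?thesis unfolding ccount_def using assms by (simp add: card_Inl_Inr_image classical_def)
qed

lemma Rbar_dunion:
  assumes "wf_diagram D1" "wf_diagram D2"
  shows "Rbar (dunion D1 D2) s = Rbar D1 (s \<circ> Inl) * Rbar D2 (s \<circ> Inr)"
proof -
  have "finite (crossings D1)" "finite (crossings D2)" using assms by (simp_all add: wf_diagram_def)
  note count = count_res_dunion[OF this]
  have exponent: "2 * a_st (dunion D1 D2) s + 4 * b_st (dunion D1 D2) s =
      (2 * a_st D1 (s \<circ> Inl) + 4 * b_st D1 (s \<circ> Inl)) + (2 * a_st D2 (s \<circ> Inr) + 4 * b_st D2 (s \<circ> Inr))"
    unfolding a_st_def b_st_def count by simp
  have singular: "alpha_st (dunion D1 D2) s = alpha_st D1 (s \<circ> Inl) + alpha_st D2 (s \<circ> Inr)"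
    "beta_st (dunion D1 D2) s = beta_st D1 (s \<circ> Inl) + beta_st D2 (s \<circ> Inr)"
    unfolding alpha_st_def beta_st_def count by simp_all
  show ?thesis
    unfolding Rbar_def exponent singular ncurves_dunion[OF assms] fls_X_intpow_times_fls_X_intpow[symmetric]
    by (simp add: power_add algebra_simps)
qed

lemma weight_map_dunion_restrict:
  assumes "weight_map (dunion D1 D2) s \<tau>"
  shows "weight_map D1 (s \<circ> Inl) (\<tau> \<circ> inl_arc)" and "weight_map D2 (s \<circ> Inr) (\<tau> \<circ> inr_arc)"
  using assms unfolding weight_map_def
  by (auto simp: ht_join_dunion hh_join_dunion tt_join_dunion)

lemma parity_with_dunion:
  assumes "finite (crossings D1)" "finite (crossings D2)"
  shows "parity_with (dunion D1 D2) \<tau> = parity_with D1 (\<tau> \<circ> inl_arc) * parity_with D2 (\<tau> \<circ> inr_arc)"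
proof -
  have virtual: "virtual (dunion D1 D2) = Inl ` virtual D1 \<union> Inr ` virtual D2"
    by (auto simp: virtual_def)
  have "finite (virtual D1)" "finite (virtual D2)" using assms by (simp_all add: virtual_def)
  then have "parity_with (dunion D1 D2) \<tau> =
      (\<Prod>v\<in>Inl ` virtual D1. \<tau> (v, True) * \<tau> (v, False)) * (\<Prod>v\<in>Inr ` virtual D2. \<tau> (v, True) * \<tau> (v, False))"
    unfolding parity_with_def virtual by (intro prod.union_disjoint) auto
  then show ?thesis unfolding parity_with_def by (simp add: prod.reindex)
qed

lemma nonvirtual_dunion: "nonvirtual (dunion D1 D2) = Inl ` nonvirtual D1 \<union> Inr ` nonvirtual D2"
  by (auto simp: nonvirtual_def)

lemma states_dunion_restrict:
  assumes "s \<in> states (dunion D1 D2)"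
  shows "s \<circ> Inl \<in> states D1" "s \<circ> Inr \<in> states D2"
  using assms by (auto simp: states_def nonvirtual_dunion)

lemma parity_dunion:
  assumes wf: "wf_diagram D1" "wf_diagram D2"
    and indep: "parity_independent D1" "parity_independent D2"
    and s: "s \<in> states (dunion D1 D2)"
  shows "parity (dunion D1 D2) s = parity D1 (s \<circ> Inl) * parity D2 (s \<circ> Inr)"
proof -
  let ?\<tau> = "SOME \<tau>. weight_map (dunion D1 D2) s \<tau>"
  have \<tau>: "weight_map (dunion D1 D2) s ?\<tau>"
    using weight_map_exists[OF wf_dunion[OF wf]] by (rule someI_ex)
  have "parity_with D1 (?\<tau> \<circ> inl_arc) = parity D1 (s \<circ> Inl)"
    using indep(1) states_dunion_restrict(1)[OF s] weight_map_dunion_restrict(1)[OF \<tau>]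
      someI_ex[OF weight_map_exists[OF wf(1)]]
    unfolding parity_independent_def parity_def by blast
  moreover have "parity_with D2 (?\<tau> \<circ> inr_arc) = parity D2 (s \<circ> Inr)"
    using indep(2) states_dunion_restrict(2)[OF s] weight_map_dunion_restrict(2)[OF \<tau>]
      someI_ex[OF weight_map_exists[OF wf(2)]]
    unfolding parity_independent_def parity_def by blast
  moreover have "finite (crossings D1)" "finite (crossings D2)" using wf by (simp_all add: wf_diagram_def)
  ultimately show ?thesis unfolding parity_def by (simp add: parity_with_dunion)
qed

lemma bij_betw_states_dunion:
  "bij_betw (\<lambda>(s1, s2). case_sum s1 s2) (states D1 \<times> states D2) (states (dunion D1 D2))"
proof (rule bij_betw_byWitness[where f' = "\<lambda>s. (s \<circ> Inl, s \<circ> Inr)"])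
  show "(\<lambda>(s1, s2). case_sum s1 s2) ` (states D1 \<times> states D2) \<subseteq> states (dunion D1 D2)"
    by (auto simp: states_def nonvirtual_dunion inj_image_mem_iff split: sum.split)
  show "(\<lambda>s. (s \<circ> Inl, s \<circ> Inr)) ` states (dunion D1 D2) \<subseteq> states D1 \<times> states D2"
    using states_dunion_restrict by blast
qed (auto simp: fun_eq_iff split: sum.split)

lemma sum_Rbar_parity_dunion:
  assumes wf: "wf_diagram D1" "wf_diagram D2"
    and indep: "parity_independent D1" "parity_independent D2"
  shows "(\<Sum>s\<in>{s \<in> states (dunion D1 D2). parity (dunion D1 D2) s = \<epsilon>}. Rbar (dunion D1 D2) s) =
    (\<Sum>(s1, s2)\<in>{(s1, s2) \<in> states D1 \<times> states D2. parity D1 s1 * parity D2 s2 = \<epsilon>}. Rbar D1 s1 * Rbar D2 s2)"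
proof -
  let ?glue = "\<lambda>(s1, s2). case_sum s1 s2"
  have "{(s1, s2) \<in> states D1 \<times> states D2. parity D1 s1 * parity D2 s2 = \<epsilon>} =
      {x \<in> states D1 \<times> states D2. parity D1 (fst x) * parity D2 (snd x) = \<epsilon>}" by auto
  moreover have "bij_betw ?glue {x \<in> states D1 \<times> states D2. parity D1 (fst x) * parity D2 (snd x) = \<epsilon>}
      {s \<in> states (dunion D1 D2). parity (dunion D1 D2) s = \<epsilon>}"
  proof (rule bij_betw_Collect[OF bij_betw_states_dunion])
    fix x assume "x \<in> states D1 \<times> states D2"
    then have "?glue x \<in> states (dunion D1 D2)" using bij_betwE[OF bij_betw_states_dunion] by blast
    then show "parity (dunion D1 D2) (?glue x) = \<epsilon> \<longleftrightarrow> parity D1 (fst x) * parity D2 (snd x) = \<epsilon>"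
      using parity_dunion[OF wf indep] by (simp add: split_def case_sum_o_inj)
  qed
  ultimately show ?thesis
    by (simp add: sum.reindex_bij_betw[symmetric] Rbar_dunion[OF wf] split_def case_sum_o_inj)
qed

theorem lemma4p4:
  fixes D1 :: "'a diagram" and D2 :: "'b diagram"
  assumes "wf_diagram D1" and "wf_diagram D2"
    and "parity_independent D1" and "parity_independent D2"
  shows "Rinv (dunion D1 D2) = [: phi (dunion D1 D2) :] * [:0, 1:] + [: psi (dunion D1 D2) :] \<and>
     phi (dunion D1 D2) = phi D1 * psi D2 + psi D1 * phi D2 \<and>
     psi (dunion D1 D2) = phi D1 * phi D2 + psi D1 * psi D2"
proof (intro conjI)
  note wf = assms(1,2)
  show "Rinv (dunion D1 D2) = [: phi (dunion D1 D2) :] * [:0, 1:] + [: psi (dunion D1 D2) :]"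
    by (rule Rinv_eq_phi_psi[OF wf_dunion[OF wf]])
  have fin: "finite (crossings D1)" "finite (crossings D2)" using wf by (simp_all add: wf_diagram_def)
  have sign_split: "(\<Sum>s\<in>{s \<in> states (dunion D1 D2). parity (dunion D1 D2) s = \<epsilon>}. Rbar (dunion D1 D2) s) =
      (\<Sum>s\<in>{s \<in> states D1. parity D1 s = 1}. Rbar D1 s) * (\<Sum>s\<in>{s \<in> states D2. parity D2 s = \<epsilon>}. Rbar D2 s) +
      (\<Sum>s\<in>{s \<in> states D1. parity D1 s = -1}. Rbar D1 s) * (\<Sum>s\<in>{s \<in> states D2. parity D2 s = -\<epsilon>}. Rbar D2 s)"
    if "\<epsilon> = 1 \<or> \<epsilon> = -1" for \<epsilon>
    unfolding sum_Rbar_parity_dunion[OF assms]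
    by (rule sum_product_sign_filter) (use that fin finite_states parity_eq_1_or_minus_1 wf in auto)
  show "phi (dunion D1 D2) = phi D1 * psi D2 + psi D1 * phi D2"
    using sign_split[of "-1"] unfolding phi_def psi_def ccount_dunion[OF fin] by (simp add: power_add algebra_simps)
  show "psi (dunion D1 D2) = phi D1 * phi D2 + psi D1 * psi D2"
    using sign_split[of 1] unfolding phi_def psi_def ccount_dunion[OF fin] by (simp add: power_add algebra_simps)
qed

end
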